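(* Let $M$ be a finite abelian group of order $m$, $J\colon M\times M\to\mathbf{C}$, and $i\colon\hat{M}\to\hat{M}$ a bijection with $i(x)=x\,i(x^{-1})$ for all $x$, such that $J(\alpha,\beta)=\frac{1}{m}\sum_{x\in\hat{M}}\alpha(i(x))\beta(i(x)x^{-1})$ for all $\alpha,\beta\in M$. Define $x\oplus y=x\,i(x/y)^{-1}$ for $x,y\in\hat{M}$. Then \[ J(\alpha,\beta)=\frac{1}{m}\sum_{\substack{x\oplus y=1,\\ x,y\in\hat{M}}}\alpha(x)\beta(y)\quad\text{for all }\alpha,\beta\in M. \]
   Context: $\hat{M}$ is the Pontryagin dual of $M$, written multiplicatively with identity $1$; for $\alpha\in M$, $x\in\hat{M}$, $\alpha(x)$ is the value of the character $x$ at $\alpha$. (In the paper, $J$ is a Jacobi function, but this is not used.) *)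

theory Defs
  imports Complex_Main
begin

text \<open>The finite abelian group M is a type of class ab_group_add (written additively),
  combined with class finite.\<close>

definition dual :: "('a::ab_group_add \<Rightarrow> complex) set" where
  "dual = {\<chi>. (\<forall>a. cmod (\<chi> a) = 1) \<and> (\<forall>a b. \<chi> (a + b) = \<chi> a * \<chi> b)}"

definition dmult :: "('a \<Rightarrow> complex) \<Rightarrow> ('a \<Rightarrow> complex) \<Rightarrow> ('a \<Rightarrow> complex)" where
  "dmult x y = (\<lambda>a. x a * y a)"

definition dinv :: "('a \<Rightarrow> complex) \<Rightarrow> ('a \<Rightarrow> complex)" where
  "dinv x = (\<lambda>a. inverse (x a))"

definition dunit :: "'a \<Rightarrow> complex" where
  "dunit = (\<lambda>a. 1)"

definition doplus :: "(('a \<Rightarrow> complex) \<Rightarrow> ('a \<Rightarrow> complex)) \<Rightarrow> ('a \<Rightarrow> complex) \<Rightarrow> ('a \<Rightarrow> complex) \<Rightarrow> ('a \<Rightarrow> complex)" where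
  "doplus i x y = dmult x (dinv (i (dmult x (dinv y))))"

end

theory Submission
  imports Defs
begin

text \<open>Since \<open>x \<oplus> y = 1\<close> says exactly \<open>i(x/y) = x\<close>, the map \<open>z \<mapsto> (i z, i z / z)\<close> is a
  bijection from the dual group onto the solutions of \<open>x \<oplus> y = 1\<close>, with inverse
  \<open>(x, y) \<mapsto> x / y\<close>. Reindexing the sum defining \<open>J\<close> along it gives the formula.\<close>

lemma dual_nonzero: "x \<in> dual \<Longrightarrow> x a \<noteq> 0"
  unfolding dual_def by (metis (mono_tags, lifting) mem_Collect_eq norm_zero zero_neq_one)

lemma dmult_in_dual: "x \<in> dual \<Longrightarrow> y \<in> dual \<Longrightarrow> dmult x y \<in> dual"
  unfolding dual_def dmult_def by (auto simp: norm_mult)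

lemma dinv_in_dual: "x \<in> dual \<Longrightarrow> dinv x \<in> dual"
  unfolding dual_def dinv_def by (auto simp: norm_inverse)

lemma dmult_dinv_in_dual: "x \<in> dual \<Longrightarrow> y \<in> dual \<Longrightarrow> dmult x (dinv y) \<in> dual"
  by (simp add: dmult_in_dual dinv_in_dual)

lemma dmult_dinv_dmult_dinv:
  assumes "\<And>a. x a \<noteq> 0"
  shows "dmult x (dinv (dmult x (dinv y))) = y"
  using assms by (simp add: dmult_def dinv_def fun_eq_iff)

lemma doplus_eq_dunit_iff:
  assumes "\<forall>z\<in>dual. i z \<in> dual" and "x \<in> dual" and "y \<in> dual"
  shows "doplus i x y = dunit \<longleftrightarrow> i (dmult x (dinv y)) = x"
proof -
  have "\<And>a. i (dmult x (dinv y)) a \<noteq> 0"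
    using assms dmult_dinv_in_dual dual_nonzero by blast
  then have "doplus i x y = dunit \<longleftrightarrow> (\<forall>a. x a = i (dmult x (dinv y)) a)"
    by (simp add: doplus_def dmult_def dinv_def dunit_def fun_eq_iff field_simps)
  then show ?thesis
    by auto
qed

lemma bij_betw_doplus_eq_dunit:
  assumes i_dual: "\<forall>z\<in>dual. i z \<in> dual"
  shows "bij_betw (\<lambda>z. (i z, dmult (i z) (dinv z))) dual
           {(x, y). x \<in> dual \<and> y \<in> dual \<and> doplus i x y = dunit}"
proof (rule bij_betw_byWitness[where f' = "\<lambda>(x, y). dmult x (dinv y)"])
  have cancel: "dmult x (dinv (dmult x (dinv y))) = y" if "x \<in> dual" for x y :: "'a \<Rightarrow> complex"
    using dmult_dinv_dmult_dinv dual_nonzero[OF that] by blast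
  show "\<forall>z\<in>dual. (\<lambda>(x, y). dmult x (dinv y)) (i z, dmult (i z) (dinv z)) = z"
    using i_dual cancel by simp
  show "\<forall>p\<in>{(x, y). x \<in> dual \<and> y \<in> dual \<and> doplus i x y = dunit}.
          (\<lambda>z. (i z, dmult (i z) (dinv z))) ((\<lambda>(x, y). dmult x (dinv y)) p) = p"
    using doplus_eq_dunit_iff[OF i_dual] cancel by auto
  show "(\<lambda>z. (i z, dmult (i z) (dinv z))) ` dual
          \<subseteq> {(x, y). x \<in> dual \<and> y \<in> dual \<and> doplus i x y = dunit}"
  proof clarify
    fix z :: "'a \<Rightarrow> complex"
    assume "z \<in> dual"
    then have "i z \<in> dual" and "dmult (i z) (dinv z) \<in> dual"
      using i_dual dmult_dinv_in_dual by auto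
    moreover have "i (dmult (i z) (dinv (dmult (i z) (dinv z)))) = i z"
      using \<open>i z \<in> dual\<close> cancel by simp
    ultimately show "i z \<in> dual \<and> dmult (i z) (dinv z) \<in> dual
        \<and> doplus i (i z) (dmult (i z) (dinv z)) = dunit"
      using doplus_eq_dunit_iff[OF i_dual \<open>i z \<in> dual\<close>] by simp
  qed
  show "(\<lambda>(x, y). dmult x (dinv y)) ` {(x, y). x \<in> dual \<and> y \<in> dual \<and> doplus i x y = dunit}
          \<subseteq> dual"
    using dmult_dinv_in_dual by auto
qed

theorem mainTheorem15:
  fixes J :: "'a::{ab_group_add, finite} \<Rightarrow> 'a \<Rightarrow> complex"
    and i :: "('a \<Rightarrow> complex) \<Rightarrow> ('a \<Rightarrow> complex)"
  assumes bij: "bij_betw i dual dual"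
    and ix: "\<forall>x\<in>dual. i x = dmult x (i (dinv x))"
    and J: "\<forall>\<alpha> \<beta>. J \<alpha> \<beta> = (1 / of_nat (card (UNIV :: 'a set))) *
              (\<Sum>x\<in>dual. i x \<alpha> * dmult (i x) (dinv x) \<beta>)"
  shows "\<forall>\<alpha> \<beta>. J \<alpha> \<beta> = (1 / of_nat (card (UNIV :: 'a set))) *
              (\<Sum>(x, y)\<in>{(x, y). x \<in> dual \<and> y \<in> dual \<and> doplus i x y = dunit}. x \<alpha> * y \<beta>)"
proof (intro allI)
  fix \<alpha> \<beta> :: 'a
  have "\<forall>z\<in>dual. i z \<in> dual"
    using bij_betw_apply[OF bij] by blast
  then have "(\<Sum>(x, y)\<in>{(x, y). x \<in> dual \<and> y \<in> dual \<and> doplus i x y = dunit}. x \<alpha> * y \<beta>)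
      = (\<Sum>z\<in>dual. i z \<alpha> * dmult (i z) (dinv z) \<beta>)"
    by (simp add: sum.reindex_bij_betw[OF bij_betw_doplus_eq_dunit, symmetric])
  then show "J \<alpha> \<beta> = (1 / of_nat (card (UNIV :: 'a set))) *
      (\<Sum>(x, y)\<in>{(x, y). x \<in> dual \<and> y \<in> dual \<and> doplus i x y = dunit}. x \<alpha> * y \<beta>)"
    using J by simp
qed

end
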